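(* Let $L$ be an infinite set and let $Q$ be either the edgeless cube $Q_L$ or the edged cube $\bar Q_L$. The universally convergent basic sequences on $Q$ form a submonoid $\mathrm{uc}_L$ of the monoid $\mathrm{m}_L$ of all basic sequences under concatenation.
   Context: Let $L$ be an infinite set, $-L=\{-r:r\in L\}$ a disjoint copy of $L$, and $0$ a new element; $L^\dagger=-L\cup\{0\}\cup L$ with $-(-r)=r$, $-0=0$. Adjoin $\pm\infty$ with $-(+\infty)=-\infty$ and set $\bar L^\dagger=L^\dagger\cup\{\pm\infty\}$. Points of $U=(\bar L^\dagger)^3$ have coordinates $x,y,z$. The edgeless cube $Q_L$ is the set of points of $U$ with exactly one coordinate in $\{\pm\infty\}$ (cells). The edged cube $\bar Q_L$ is the set of cells $(p,i)$ with $p\in U$, $i\in\{x,y,z\}$, $p_i\in\{\pm\infty\}$ ($i$ marks the face). For $i\in\{x,y,z\}$, $\alpha\in\bar L^\dagger$, the quarter-turn twist $T_{i,\alpha}$ is the permutation of cells fixing every cell whose point $p$ has $p_i\ne\alpha$ and acting on the others by $T_{x,\alpha}(\alpha,y,z)=(\alpha,-z,y)$, $T_{y,\alpha}(x,\alpha,z)=(z,\alpha,-x)$, $T_{z,\alpha}(x,y,\alpha)=(-y,x,\alpha)$ (in $\bar Q_L$ the marked coordinate is carried along by the rotation). Basic twists are $T,T^2,T^3$ for quarter-turn twists $T$. A basic sequence is a sequence $\langle\sigma_\eta:\eta<\theta\rangle$ of basic twists of ordinal length $\theta$; $\mathrm{m}_L$ is the monoid of all basic sequences under concatenation, with identity the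 empty sequence. A labelling is a map $f$ from cells to $X\cup\{\mathrm{NaC}\}$ for a set $X\not\ni\mathrm{NaC}$; it is legal if it never takes value NaC. A twist $\sigma$ acts by $(\sigma f)(c)=f(\sigma^{-1}c)$. Applying $\langle\sigma_\eta:\eta<\theta\rangle$ to $f_0$ produces $f_{\eta+1}=\sigma_\eta f_\eta$, and for limit $\lambda\le\theta$, $f_\lambda(c)$ is the eventually constant value of $f_\eta(c)$ ($\eta<\lambda$) if it exists and NaC otherwise; $f_\theta$ is the terminal labelling. The sequence is universally convergent if, applied to the identity labelling (each cell labelled by itself), its terminal labelling is legal. *)

theory Defs
  imports Main
begin

text \<open>Elements of bar L-dagger over a set L of type 'a: Pos a stands for a (a in L),
  Neg a for -a, Zero for 0, PInf/MInf for +infinity/-infinity.\<close>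
datatype 'a ext = Neg 'a | Zero | Pos 'a | PInf | MInf

fun eneg :: "'a ext \<Rightarrow> 'a ext" where
  "eneg (Neg a) = Pos a"
| "eneg (Pos a) = Neg a"
| "eneg Zero = Zero"
| "eneg PInf = MInf"
| "eneg MInf = PInf"

definition barL :: "'a set \<Rightarrow> 'a ext set" where
  "barL L = Neg ` L \<union> Pos ` L \<union> {Zero, PInf, MInf}"

definition is_inf :: "'a ext \<Rightarrow> bool" where
  "is_inf e \<longleftrightarrow> e = PInf \<or> e = MInf"

type_synonym 'a pt = "'a ext \<times> 'a ext \<times> 'a ext"

datatype axis = AX | AY | AZ

fun coord :: "'a pt \<Rightarrow> axis \<Rightarrow> 'a ext" where
  "coord (x, y, z) AX = x"
| "coord (x, y, z) AY = y"
| "coord (x, y, z) AZ = z"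

definition in_U :: "'a set \<Rightarrow> 'a pt \<Rightarrow> bool" where
  "in_U L p \<longleftrightarrow> coord p AX \<in> barL L \<and> coord p AY \<in> barL L \<and> coord p AZ \<in> barL L"

definition edgeless_cube :: "'a set \<Rightarrow> 'a pt set" where
  "edgeless_cube L = {(x, y, z). in_U L (x, y, z) \<and>
     ((is_inf x \<and> \<not> is_inf y \<and> \<not> is_inf z) \<or>
      (\<not> is_inf x \<and> is_inf y \<and> \<not> is_inf z) \<or>
      (\<not> is_inf x \<and> \<not> is_inf y \<and> is_inf z))}"

definition edged_cube :: "'a set \<Rightarrow> ('a pt \<times> axis) set" where
  "edged_cube L = {(p, i). in_U L p \<and> is_inf (coord p i)}"

fun qturn :: "axis \<Rightarrow> 'a ext \<Rightarrow> 'a pt \<Rightarrow> 'a pt" where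
  "qturn AX \<alpha> (x, y, z) = (if x = \<alpha> then (x, eneg z, y) else (x, y, z))"
| "qturn AY \<alpha> (x, y, z) = (if y = \<alpha> then (z, y, eneg x) else (x, y, z))"
| "qturn AZ \<alpha> (x, y, z) = (if z = \<alpha> then (eneg y, x, z) else (x, y, z))"

text \<open>How the marked coordinate is carried along by the rotation about axis i.\<close>
fun mark_turn :: "axis \<Rightarrow> axis \<Rightarrow> axis" where
  "mark_turn AX AX = AX" | "mark_turn AX AY = AZ" | "mark_turn AX AZ = AY"
| "mark_turn AY AX = AZ" | "mark_turn AY AY = AY" | "mark_turn AY AZ = AX"
| "mark_turn AZ AX = AY" | "mark_turn AZ AY = AX" | "mark_turn AZ AZ = AZ"

definition qturn_edged :: "axis \<Rightarrow> 'a ext \<Rightarrow> 'a pt \<times> axis \<Rightarrow> 'a pt \<times> axis" where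
  "qturn_edged i \<alpha> c = (case c of (p, j) \<Rightarrow>
     (if coord p i = \<alpha> then (qturn i \<alpha> p, mark_turn i j) else (p, j)))"

text \<open>A basic twist: Tw i alpha k stands for (T_{i,alpha})^k, k in {1,2,3}.\<close>
datatype 'a twist = Tw axis "'a ext" nat

definition valid_twist :: "'a set \<Rightarrow> 'a twist \<Rightarrow> bool" where
  "valid_twist L t = (case t of Tw i \<alpha> k \<Rightarrow> \<alpha> \<in> barL L \<and> k \<in> {1, 2, 3})"

definition perm_edgeless :: "'a twist \<Rightarrow> 'a pt \<Rightarrow> 'a pt" where
  "perm_edgeless t = (case t of Tw i \<alpha> k \<Rightarrow> qturn i \<alpha> ^^ k)"

definition perm_edged :: "'a twist \<Rightarrow> 'a pt \<times> axis \<Rightarrow> 'a pt \<times> axis" where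
  "perm_edged t = (case t of Tw i \<alpha> k \<Rightarrow> qturn_edged i \<alpha> ^^ k)"

text \<open>A labelling of cells of type 'c with values in 'x; None plays the role of NaC.
  The twist sigma acts by (sigma f)(c) = f(sigma^{-1} c).\<close>
definition act :: "('t \<Rightarrow> 'c \<Rightarrow> 'c) \<Rightarrow> 't \<Rightarrow> ('c \<Rightarrow> 'x option) \<Rightarrow> ('c \<Rightarrow> 'x option)" where
  "act P \<sigma> f = (\<lambda>c. f (inv (P \<sigma>) c))"

text \<open>Basic sequences of ordinal length: indexed by the field of a well-order r.
  Stages are Some eta (eta in Field r) and None (the terminal stage theta).\<close>
definition basic_seq :: "'a set \<Rightarrow> 'i rel \<Rightarrow> ('i \<Rightarrow> 'a twist) \<Rightarrow> bool" where
  "basic_seq L r s \<longleftrightarrow> Well_order r \<and> (\<forall>i\<in>Field r. valid_twist L (s i))"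

definition stages :: "'i rel \<Rightarrow> 'i option set" where
  "stages r = Some ` Field r \<union> {None}"

definition sless :: "'i rel \<Rightarrow> 'i option \<Rightarrow> 'i option \<Rightarrow> bool" where
  "sless r a b = (case (a, b) of
      (Some i, Some j) \<Rightarrow> (i, j) \<in> r \<and> i \<noteq> j
    | (Some i, None) \<Rightarrow> i \<in> Field r
    | (None, _) \<Rightarrow> False)"

definition ev_const :: "'i rel \<Rightarrow> ('i option \<Rightarrow> 'c \<Rightarrow> 'x option) \<Rightarrow> 'i option \<Rightarrow> 'c \<Rightarrow> 'x option \<Rightarrow> bool" where
  "ev_const r F b c v \<longleftrightarrow> (\<exists>\<eta>\<in>Field r. sless r (Some \<eta>) b \<and>
      (\<forall>\<xi>\<in>Field r. (\<xi> = \<eta> \<or> sless r (Some \<eta>) (Some \<xi>)) \<and> sless r (Some \<xi>) b \<longrightarrow> F (Some \<xi>) c = v))"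

definition is_run :: "('t \<Rightarrow> 'c \<Rightarrow> 'c) \<Rightarrow> 'i rel \<Rightarrow> ('i \<Rightarrow> 't) \<Rightarrow> ('c \<Rightarrow> 'x option)
    \<Rightarrow> ('i option \<Rightarrow> 'c \<Rightarrow> 'x option) \<Rightarrow> bool" where
  "is_run P r s f0 F \<longleftrightarrow> (\<forall>b\<in>stages r.
     \<comment> \<open>stage 0\<close>
     ((\<not> (\<exists>\<eta>\<in>Field r. sless r (Some \<eta>) b)) \<longrightarrow> F b = f0) \<and>
     \<comment> \<open>successor stage eta+1\<close>
     (\<forall>\<eta>\<in>Field r. sless r (Some \<eta>) b \<and> \<not> (\<exists>\<xi>\<in>Field r. sless r (Some \<eta>) (Some \<xi>) \<and> sless r (Some \<xi>) b)
         \<longrightarrow> F b = act P (s \<eta>) (F (Some \<eta>))) \<and>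
     \<comment> \<open>limit stage\<close>
     (((\<exists>\<eta>\<in>Field r. sless r (Some \<eta>) b) \<and>
       (\<forall>\<eta>\<in>Field r. sless r (Some \<eta>) b \<longrightarrow> (\<exists>\<xi>\<in>Field r. sless r (Some \<eta>) (Some \<xi>) \<and> sless r (Some \<xi>) b)))
       \<longrightarrow> (\<forall>c. (if \<exists>v. ev_const r F b c v then ev_const r F b c (F b c) else F b c = None))))"

definition univ_conv :: "'c set \<Rightarrow> ('t \<Rightarrow> 'c \<Rightarrow> 'c) \<Rightarrow> 'i rel \<Rightarrow> ('i \<Rightarrow> 't) \<Rightarrow> bool" where
  "univ_conv C P r s \<longleftrightarrow> (\<exists>F. is_run P r s (\<lambda>c. Some c) F \<and> (\<forall>c\<in>C. F None c \<noteq> None))"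

definition concat_rel :: "'i rel \<Rightarrow> 'j rel \<Rightarrow> ('i + 'j) rel" where
  "concat_rel r1 r2 = map_prod Inl Inl ` r1 \<union> map_prod Inr Inr ` r2
     \<union> (Inl ` Field r1) \<times> (Inr ` Field r2)"

definition concat_seq :: "('i \<Rightarrow> 't) \<Rightarrow> ('j \<Rightarrow> 't) \<Rightarrow> ('i + 'j \<Rightarrow> 't)" where
  "concat_seq s1 s2 = case_sum s1 s2"

end

theory Submission
  imports Defs
begin

text \<open>Every twist permutes the cells of the cube,
  so at each stage the labelling is injective on its legal cells and labels cells of the cube by
  cells of the cube; eventual constancy preserves both properties at limit stages. If g is the
  terminal labelling of a first sequence, running a second sequence from g yields g composed with
  its run from the identity, because injectivity of g lets eventual constancy pass through g in
  both directions. The run of the concatenation is the run of the first sequence followed by this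
  composed run: at each stage, a cofinal final segment of the predecessors determines the stage,
  and that segment lies entirely in one of the two sequences. Its terminal labelling is g after the
  terminal labelling of the second sequence, which is legal on the cube.\<close>

lemma eneg_eneg [simp]: "eneg (eneg e) = e"
  by (cases e) auto

lemma eneg_in_barL_iff [simp]: "eneg e \<in> barL L \<longleftrightarrow> e \<in> barL L"
  by (cases e) (auto simp: barL_def)

lemma is_inf_eneg [simp]: "is_inf (eneg e) \<longleftrightarrow> is_inf e"
  by (cases e) (auto simp: is_inf_def)

lemma qturn_funpow_4: "qturn i \<alpha> ^^ 4 = id"
proof
  fix p :: "'a pt"
  show "(qturn i \<alpha> ^^ 4) p = id p"
    by (cases i; cases p) (auto simp: numeral_eq_Suc)
qed

lemma coord_qturn_axis [simp]: "coord (qturn i \<alpha> p) i = coord p i"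
  by (cases i; cases p) auto

lemma mark_turn_funpow_4: "mark_turn i ^^ 4 = id"
proof
  fix j show "(mark_turn i ^^ 4) j = id j"
    by (cases i; cases j) (auto simp: numeral_eq_Suc)
qed

lemma qturn_edged_funpow:
  "(qturn_edged i \<alpha> ^^ n) (p, j) =
     (if coord p i = \<alpha> then ((qturn i \<alpha> ^^ n) p, (mark_turn i ^^ n) j) else (p, j))"
proof (induction n)
  case (Suc n)
  have "coord ((qturn i \<alpha> ^^ n) p) i = coord p i"
    by (induction n) simp_all
  with Suc show ?case by (simp add: qturn_edged_def)
qed simp

lemma qturn_edged_funpow_4: "qturn_edged i \<alpha> ^^ 4 = id"
proof
  fix c :: "'a pt \<times> axis"
  show "(qturn_edged i \<alpha> ^^ 4) c = id c"
    by (cases c) (simp add: qturn_edged_funpow qturn_funpow_4 mark_turn_funpow_4)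
qed

lemma bij_if_funpow_eq_id:
  assumes "f ^^ n = id" and "n > 0"
  shows "bij f"
proof -
  obtain m where n: "n = Suc m" using \<open>n > 0\<close> gr0_implies_Suc by blast
  have "(f ^^ m) \<circ> f = id" "f \<circ> (f ^^ m) = id"
    using assms(1) unfolding n by (metis funpow_Suc_right funpow.simps(2))+
  then show ?thesis by (rule o_bij)
qed

lemma funpow_mem_iff: "(\<And>x. f x \<in> C \<longleftrightarrow> x \<in> C) \<Longrightarrow> (f ^^ n) x \<in> C \<longleftrightarrow> x \<in> C"
  by (induction n) auto

lemma qturn_mem_edgeless_cube_iff: "qturn i \<alpha> p \<in> edgeless_cube L \<longleftrightarrow> p \<in> edgeless_cube L"
  by (cases i; cases p) (auto simp: edgeless_cube_def in_U_def)

lemma qturn_edged_mem_edged_cube_iff: "qturn_edged i \<alpha> c \<in> edged_cube L \<longleftrightarrow> c \<in> edged_cube L"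
proof -
  obtain p j where "c = (p, j)" by (cases c)
  then show ?thesis
    by (cases i; cases j; cases p) (auto simp: edged_cube_def in_U_def qturn_edged_def)
qed

definition cell_symmetries :: "'c set \<Rightarrow> ('t \<Rightarrow> 'c \<Rightarrow> 'c) \<Rightarrow> bool" where
  "cell_symmetries C P \<longleftrightarrow> (\<forall>t. bij (P t) \<and> (\<forall>c. P t c \<in> C \<longleftrightarrow> c \<in> C))"

lemma cell_symmetries_edgeless: "cell_symmetries (edgeless_cube L) perm_edgeless"
  unfolding cell_symmetries_def perm_edgeless_def
  by (auto split: twist.split intro!: bij_fn bij_if_funpow_eq_id[OF qturn_funpow_4]
      simp: funpow_mem_iff qturn_mem_edgeless_cube_iff)

lemma cell_symmetries_edged: "cell_symmetries (edged_cube L) perm_edged"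
  unfolding cell_symmetries_def perm_edged_def
  by (auto split: twist.split intro!: bij_fn bij_if_funpow_eq_id[OF qturn_edged_funpow_4]
      simp: funpow_mem_iff qturn_edged_mem_edged_cube_iff)

lemma cell_symmetries_inv:
  assumes "cell_symmetries C P"
  shows "inj (inv (P t))" and "inv (P t) c \<in> C \<longleftrightarrow> c \<in> C"
proof -
  have "bij (P t)" and mem: "\<And>c. P t c \<in> C \<longleftrightarrow> c \<in> C"
    using assms by (auto simp: cell_symmetries_def)
  then show "inj (inv (P t))" using bij_imp_bij_inv bij_is_inj by blast
  show "inv (P t) c \<in> C \<longleftrightarrow> c \<in> C"
    using mem[of "inv (P t) c"] \<open>bij (P t)\<close> by (simp add: bij_is_surj surj_f_inv_f)
qed

lemma sless_Field: "sless r (Some \<eta>) b \<Longrightarrow> \<eta> \<in> Field r"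
  by (cases b) (auto simp: sless_def intro: FieldI1)

lemma sless_None [simp]: "sless r (Some \<eta>) None \<longleftrightarrow> \<eta> \<in> Field r"
  and sless_Some_Some [simp]: "sless r (Some \<eta>) (Some \<xi>) \<longleftrightarrow> (\<eta>, \<xi>) \<in> r \<and> \<eta> \<noteq> \<xi>"
  by (simp_all add: sless_def)

lemma sless_trans:
  assumes "trans r" "antisym r" "sless r (Some \<eta>) (Some \<xi>)" "sless r (Some \<xi>) b"
  shows "sless r (Some \<eta>) b"
  using assms by (cases b) (auto dest: transD antisymD intro: FieldI1)

lemma stage_induct [consumes 2, case_names less]:
  assumes "Well_order r" and "b \<in> stages r"
    and less: "\<And>b. b \<in> stages r \<Longrightarrow> (\<And>\<eta>. sless r (Some \<eta>) b \<Longrightarrow> Q (Some \<eta>)) \<Longrightarrow> Q b"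
  shows "Q b"
proof -
  have wf: "wf (r - Id)" using \<open>Well_order r\<close> by (simp add: well_order_on_def)
  have below: "Q (Some \<eta>)" if "\<eta> \<in> Field r" for \<eta>
    using wf that
  proof (induction \<eta> rule: wf_induct_rule)
    case (less \<eta>)
    show ?case
    proof (rule assms(3))
      show "Some \<eta> \<in> stages r" using less.prems by (simp add: stages_def)
      fix \<xi> assume "sless r (Some \<xi>) (Some \<eta>)"
      then have "(\<xi>, \<eta>) \<in> r - Id" "\<xi> \<in> Field r" by (auto intro: FieldI1)
      then show "Q (Some \<xi>)" by (rule less.IH)
    qed
  qed
  show ?thesis
    by (rule assms(3)[OF \<open>b \<in> stages r\<close>]) (auto intro: below dest: sless_Field)
qed

lemma ev_const_common_stage:
  assumes "Well_order r" and "ev_const r F b c v" and "ev_const r F b d w"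
  shows "\<exists>\<xi>. sless r (Some \<xi>) b \<and> F (Some \<xi>) c = v \<and> F (Some \<xi>) d = w"
proof -
  obtain \<eta>1 where \<eta>1: "\<eta>1 \<in> Field r" "sless r (Some \<eta>1) b"
    "\<forall>\<xi>\<in>Field r. (\<xi> = \<eta>1 \<or> sless r (Some \<eta>1) (Some \<xi>)) \<and> sless r (Some \<xi>) b \<longrightarrow> F (Some \<xi>) c = v"
    using assms(2) unfolding ev_const_def by blast
  obtain \<eta>2 where \<eta>2: "\<eta>2 \<in> Field r" "sless r (Some \<eta>2) b"
    "\<forall>\<xi>\<in>Field r. (\<xi> = \<eta>2 \<or> sless r (Some \<eta>2) (Some \<xi>)) \<and> sless r (Some \<xi>) b \<longrightarrow> F (Some \<xi>) d = w"
    using assms(3) unfolding ev_const_def by blast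
  have "\<eta>1 = \<eta>2 \<or> (\<eta>1, \<eta>2) \<in> r \<or> (\<eta>2, \<eta>1) \<in> r"
    using assms(1) \<eta>1(1) \<eta>2(1) unfolding well_order_on_def linear_order_on_def total_on_def by blast
  then show ?thesis
    using \<eta>1 \<eta>2 by (metis sless_Some_Some)
qed

lemma ev_const_unique: "Well_order r \<Longrightarrow> ev_const r F b c v \<Longrightarrow> ev_const r F b c w \<Longrightarrow> v = w"
  using ev_const_common_stage[of r F b c v c w] by auto

definition succ_stage :: "'i rel \<Rightarrow> 'i \<Rightarrow> 'i option \<Rightarrow> bool" where
  "succ_stage r \<eta> b \<longleftrightarrow>
     sless r (Some \<eta>) b \<and> \<not> (\<exists>\<xi>. sless r (Some \<eta>) (Some \<xi>) \<and> sless r (Some \<xi>) b)"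

definition limit_stage :: "'i rel \<Rightarrow> 'i option \<Rightarrow> bool" where
  "limit_stage r b \<longleftrightarrow> (\<exists>\<eta>. sless r (Some \<eta>) b) \<and>
     (\<forall>\<eta>. sless r (Some \<eta>) b \<longrightarrow> (\<exists>\<xi>. sless r (Some \<eta>) (Some \<xi>) \<and> sless r (Some \<xi>) b))"

definition run_stage :: "('t \<Rightarrow> 'c \<Rightarrow> 'c) \<Rightarrow> 'i rel \<Rightarrow> ('i \<Rightarrow> 't) \<Rightarrow> ('c \<Rightarrow> 'x option)
    \<Rightarrow> ('i option \<Rightarrow> 'c \<Rightarrow> 'x option) \<Rightarrow> 'i option \<Rightarrow> bool" where
  "run_stage P r s f0 F b \<longleftrightarrow>
     ((\<nexists>\<eta>. sless r (Some \<eta>) b) \<longrightarrow> F b = f0) \<and>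
     (\<forall>\<eta>. succ_stage r \<eta> b \<longrightarrow> F b = act P (s \<eta>) (F (Some \<eta>))) \<and>
     (limit_stage r b \<longrightarrow>
       (\<forall>c. if \<exists>v. ev_const r F b c v then ev_const r F b c (F b c) else F b c = None))"

lemma is_run_iff: "is_run P r s f0 F \<longleftrightarrow> (\<forall>b\<in>stages r. run_stage P r s f0 F b)"
proof -
  have Field_bounds:
    "\<And>b. (\<exists>\<eta>\<in>Field r. sless r (Some \<eta>) b) \<longleftrightarrow> (\<exists>\<eta>. sless r (Some \<eta>) b)"
    "\<And>b Q. (\<exists>\<eta>\<in>Field r. Q \<eta> \<and> sless r (Some \<eta>) b) \<longleftrightarrow> (\<exists>\<eta>. Q \<eta> \<and> sless r (Some \<eta>) b)"
    "\<And>b Q. (\<forall>\<eta>\<in>Field r. sless r (Some \<eta>) b \<longrightarrow> Q \<eta>) \<longleftrightarrow> (\<forall>\<eta>. sless r (Some \<eta>) b \<longrightarrow> Q \<eta>)"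
    "\<And>b Q R. (\<forall>\<eta>\<in>Field r. sless r (Some \<eta>) b \<and> Q \<eta> \<longrightarrow> R \<eta>) \<longleftrightarrow>
       (\<forall>\<eta>. sless r (Some \<eta>) b \<and> Q \<eta> \<longrightarrow> R \<eta>)"
    by (blast dest: sless_Field)+
  show ?thesis
    unfolding is_run_def run_stage_def succ_stage_def limit_stage_def
    by (simp only: Field_bounds)
qed

lemma stage_cases [case_names initial succ limit]:
  obtains "\<nexists>\<eta>. sless r (Some \<eta>) b" | \<eta> where "succ_stage r \<eta> b" | "limit_stage r b"
  unfolding succ_stage_def limit_stage_def by blast

lemma run_stage_initial: "run_stage P r s f0 F b \<Longrightarrow> \<nexists>\<eta>. sless r (Some \<eta>) b \<Longrightarrow> F b = f0"
  and run_stage_succ: "run_stage P r s f0 F b \<Longrightarrow> succ_stage r \<eta> b \<Longrightarrow> F b = act P (s \<eta>) (F (Some \<eta>))"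
  and run_stage_limit: "run_stage P r s f0 F b \<Longrightarrow> limit_stage r b \<Longrightarrow>
     (if \<exists>v. ev_const r F b c v then ev_const r F b c (F b c) else F b c = None)"
  unfolding run_stage_def by blast+

lemma run_stage_limit_Some:
  "run_stage P r s f0 F b \<Longrightarrow> limit_stage r b \<Longrightarrow> F b c = Some v \<Longrightarrow> ev_const r F b c (Some v)"
  using run_stage_limit[of P r s f0 F b c] by (auto split: if_splits)

lemma run_stageI:
  assumes "(\<nexists>\<eta>. sless r (Some \<eta>) b) \<Longrightarrow> F b = f0"
    and "\<And>\<eta>. succ_stage r \<eta> b \<Longrightarrow> F b = act P (s \<eta>) (F (Some \<eta>))"
    and "\<And>c. limit_stage r b \<Longrightarrow>
           (if \<exists>v. ev_const r F b c v then ev_const r F b c (F b c) else F b c = None)"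
  shows "run_stage P r s f0 F b"
  unfolding run_stage_def using assms by blast

definition faithful_labelling :: "'c set \<Rightarrow> ('c \<Rightarrow> 'c option) \<Rightarrow> bool" where
  "faithful_labelling C f \<longleftrightarrow> inj_on f (dom f) \<and> (\<forall>c v. f c = Some v \<longrightarrow> (c \<in> C \<longleftrightarrow> v \<in> C))"

lemma faithful_labelling_act:
  assumes "cell_symmetries C P" and "faithful_labelling C f"
  shows "faithful_labelling C (act P t f)"
  unfolding faithful_labelling_def
proof (intro conjI allI impI inj_onI)
  fix c d assume "c \<in> dom (act P t f)" "d \<in> dom (act P t f)" "act P t f c = act P t f d"
  then have "inv (P t) c = inv (P t) d"
    using assms(2) unfolding act_def faithful_labelling_def by (auto dest: inj_onD)
  then show "c = d" using cell_symmetries_inv(1)[OF assms(1)] by (simp add: inj_eq)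
next
  fix c v assume "act P t f c = Some v"
  then show "c \<in> C \<longleftrightarrow> v \<in> C"
    using assms(2) cell_symmetries_inv(2)[OF assms(1)] unfolding act_def faithful_labelling_def by blast
qed

lemma faithful_labelling_limit:
  assumes "Well_order r"
    and below: "\<And>\<eta>. sless r (Some \<eta>) b \<Longrightarrow> faithful_labelling C (F (Some \<eta>))"
    and limit: "\<And>c v. F b c = Some v \<Longrightarrow> ev_const r F b c (Some v)"
  shows "faithful_labelling C (F b)"
  unfolding faithful_labelling_def
proof (intro conjI allI impI inj_onI)
  fix c d assume "c \<in> dom (F b)" "d \<in> dom (F b)" "F b c = F b d"
  then obtain v where "F b c = Some v" "F b d = Some v" by auto
  then obtain \<xi> where "sless r (Some \<xi>) b" "F (Some \<xi>) c = Some v" "F (Some \<xi>) d = Some v"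
    using ev_const_common_stage[OF assms(1) limit limit] by blast
  then show "c = d" using below unfolding faithful_labelling_def by (metis domI inj_onD)
next
  fix c v assume "F b c = Some v"
  then obtain \<xi> where "sless r (Some \<xi>) b" "F (Some \<xi>) c = Some v"
    using ev_const_common_stage[OF assms(1) limit limit] by blast
  then show "c \<in> C \<longleftrightarrow> v \<in> C" using below unfolding faithful_labelling_def by blast
qed

lemma run_from_id_faithful:
  assumes "Well_order r" and "cell_symmetries C P" and run: "is_run P r s Some F" and "b \<in> stages r"
  shows "faithful_labelling C (F b)"
  using assms(1,4)
proof (induction b rule: stage_induct)
  case (less b)
  have stage: "run_stage P r s Some F b" using run less.hyps by (simp add: is_run_iff)
  show ?case
  proof (cases rule: stage_cases[of r b])
    case initial
    then show ?thesis using run_stage_initial[OF stage] by (simp add: faithful_labelling_def)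
  next
    case (succ \<eta>)
    then have "faithful_labelling C (F (Some \<eta>))" using less.IH by (simp add: succ_stage_def)
    then show ?thesis
      using run_stage_succ[OF stage succ] faithful_labelling_act[OF assms(2)] by simp
  next
    case limit
    show ?thesis
      by (rule faithful_labelling_limit[OF assms(1) less.IH run_stage_limit_Some[OF stage limit]])
  qed
qed

lemma ev_const_map_comp:
  "ev_const r F b c (Some c') \<Longrightarrow> ev_const r (\<lambda>b. g \<circ>\<^sub>m F b) b c (g c')"
  unfolding ev_const_def by fastforce

lemma ev_const_map_comp_Some:
  assumes "inj_on g (dom g)" and "ev_const r (\<lambda>b. g \<circ>\<^sub>m F b) b c (Some w)"
  shows "\<exists>c'. g c' = Some w \<and> ev_const r F b c (Some c')"
proof -
  obtain \<eta> where \<eta>: "\<eta> \<in> Field r" "sless r (Some \<eta>) b" and tail: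
    "\<And>\<xi>. \<xi> \<in> Field r \<Longrightarrow> (\<xi> = \<eta> \<or> sless r (Some \<eta>) (Some \<xi>)) \<and> sless r (Some \<xi>) b \<Longrightarrow>
       (g \<circ>\<^sub>m F (Some \<xi>)) c = Some w"
    using assms(2) unfolding ev_const_def by blast
  obtain c' where c': "F (Some \<eta>) c = Some c'" "g c' = Some w"
    using tail[OF \<eta>(1)] \<eta>(2) by (auto simp: map_comp_Some_iff)
  have "F (Some \<xi>) c = Some c'"
    if \<xi>: "\<xi> \<in> Field r" "(\<xi> = \<eta> \<or> sless r (Some \<eta>) (Some \<xi>)) \<and> sless r (Some \<xi>) b" for \<xi>
  proof -
    obtain c'' where "F (Some \<xi>) c = Some c''" "g c'' = Some w"
      using tail[OF \<xi>] by (auto simp: map_comp_Some_iff)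
    with c'(2) assms(1) show ?thesis by (metis domI inj_onD)
  qed
  with \<eta> c'(2) show ?thesis unfolding ev_const_def by blast
qed

lemma is_run_map_comp:
  assumes "Well_order r" and run: "is_run P r s Some F" and "inj_on g (dom g)"
  shows "is_run P r s g (\<lambda>b. g \<circ>\<^sub>m F b)"
  unfolding is_run_iff
proof
  fix b assume "b \<in> stages r"
  then have stage: "run_stage P r s Some F b" using run by (simp add: is_run_iff)
  show "run_stage P r s g (\<lambda>b. g \<circ>\<^sub>m F b) b"
  proof (rule run_stageI)
    assume "\<nexists>\<eta>. sless r (Some \<eta>) b"
    then show "g \<circ>\<^sub>m F b = g" using run_stage_initial[OF stage] by (simp add: map_comp_def)
  next
    fix \<eta> assume "succ_stage r \<eta> b"
    then show "g \<circ>\<^sub>m F b = act P (s \<eta>) (g \<circ>\<^sub>m F (Some \<eta>))"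
      using run_stage_succ[OF stage] by (simp add: map_comp_def act_def)
  next
    fix c assume limit: "limit_stage r b"
    show "if \<exists>v. ev_const r (\<lambda>b. g \<circ>\<^sub>m F b) b c v
          then ev_const r (\<lambda>b. g \<circ>\<^sub>m F b) b c ((g \<circ>\<^sub>m F b) c) else (g \<circ>\<^sub>m F b) c = None"
    proof (cases "F b c")
      case (Some c')
      then show ?thesis
        using ev_const_map_comp[OF run_stage_limit_Some[OF stage limit Some]] by auto
    next
      case None
      have "v = None" if ev: "ev_const r (\<lambda>b. g \<circ>\<^sub>m F b) b c v" for v
      proof (rule ccontr)
        assume "v \<noteq> None"
        then obtain w where "v = Some w" by blast
        then obtain c' where "ev_const r F b c (Some c')"
          using ev_const_map_comp_Some[OF assms(3), of r F b c w] ev by blast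
        then show False
          using run_stage_limit[OF stage limit, of c] None ev_const_unique[OF assms(1), of F b c]
          by (metis option.distinct(1))
      qed
      with None show ?thesis by auto
    qed
  qed
qed

text \<open>If h maps the predecessors of b order-isomorphically onto a cofinal final segment of the
  predecessors of b', then whether b' is initial, a successor or a limit stage, and which values are
  eventually constant below b', can be read off at b.\<close>

definition cofinal_segment_embedding ::
    "'i rel \<Rightarrow> 'i option \<Rightarrow> 'j rel \<Rightarrow> 'j option \<Rightarrow> ('i \<Rightarrow> 'j) \<Rightarrow> bool" where
  "cofinal_segment_embedding r b r' b' h \<longleftrightarrow>
     (\<forall>\<eta>. sless r (Some \<eta>) b \<longrightarrow> sless r' (Some (h \<eta>)) b') \<and>
     (\<forall>\<eta> \<xi>. sless r (Some \<eta>) b \<longrightarrow> sless r (Some \<xi>) b \<longrightarrow>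
        (sless r' (Some (h \<eta>)) (Some (h \<xi>)) \<longleftrightarrow> sless r (Some \<eta>) (Some \<xi>))) \<and>
     (\<forall>\<eta>'. sless r' (Some \<eta>') b' \<longrightarrow>
        (\<exists>\<eta>. sless r (Some \<eta>) b \<and> (h \<eta> = \<eta>' \<or> sless r' (Some \<eta>') (Some (h \<eta>))))) \<and>
     (\<forall>\<eta> \<xi>'. sless r (Some \<eta>) b \<longrightarrow> sless r' (Some (h \<eta>)) (Some \<xi>') \<longrightarrow> sless r' (Some \<xi>') b' \<longrightarrow>
        (\<exists>\<xi>. sless r (Some \<xi>) b \<and> \<xi>' = h \<xi>))"

context
  fixes r :: "'i rel" and b :: "'i option" and r' :: "'j rel" and b' :: "'j option" and h :: "'i \<Rightarrow> 'j"
  assumes emb: "cofinal_segment_embedding r b r' b' h"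
begin

lemma embedding_into: "sless r (Some \<eta>) b \<Longrightarrow> sless r' (Some (h \<eta>)) b'"
  and embedding_order_iff: "sless r (Some \<eta>) b \<Longrightarrow> sless r (Some \<xi>) b \<Longrightarrow>
      sless r' (Some (h \<eta>)) (Some (h \<xi>)) \<longleftrightarrow> sless r (Some \<eta>) (Some \<xi>)"
  and embedding_cofinal: "sless r' (Some \<eta>') b' \<Longrightarrow>
      \<exists>\<eta>. sless r (Some \<eta>) b \<and> (h \<eta> = \<eta>' \<or> sless r' (Some \<eta>') (Some (h \<eta>)))"
  and embedding_final: "sless r (Some \<eta>) b \<Longrightarrow> sless r' (Some (h \<eta>)) (Some \<xi>') \<Longrightarrow> sless r' (Some \<xi>') b' \<Longrightarrow>
      \<exists>\<xi>. sless r (Some \<xi>) b \<and> \<xi>' = h \<xi>"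
  using emb unfolding cofinal_segment_embedding_def by blast+

lemma ev_const_embedding_iff:
  assumes "trans r'" "antisym r'" and F': "\<And>\<eta>. sless r (Some \<eta>) b \<Longrightarrow> F' (Some (h \<eta>)) = F (Some \<eta>)"
  shows "ev_const r' F' b' c v \<longleftrightarrow> ev_const r F b c v"
proof
  assume "ev_const r' F' b' c v"
  then obtain \<eta>' where "sless r' (Some \<eta>') b'" and tail':
    "\<And>\<xi>'. (\<xi>' = \<eta>' \<or> sless r' (Some \<eta>') (Some \<xi>')) \<and> sless r' (Some \<xi>') b' \<Longrightarrow> F' (Some \<xi>') c = v"
    unfolding ev_const_def by (blast dest: sless_Field)
  then obtain \<eta> where \<eta>: "sless r (Some \<eta>) b" "h \<eta> = \<eta>' \<or> sless r' (Some \<eta>') (Some (h \<eta>))"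
    using embedding_cofinal by blast
  have "F (Some \<xi>) c = v" if \<xi>: "(\<xi> = \<eta> \<or> sless r (Some \<eta>) (Some \<xi>)) \<and> sless r (Some \<xi>) b" for \<xi>
  proof -
    have "h \<xi> = \<eta>' \<or> sless r' (Some \<eta>') (Some (h \<xi>))"
    proof (cases "\<xi> = \<eta>")
      case False
      then have "sless r' (Some (h \<eta>)) (Some (h \<xi>))" using \<xi> \<eta>(1) embedding_order_iff by blast
      then show ?thesis using \<eta>(2) sless_trans[OF assms(1,2)] by blast
    qed (use \<eta> in simp)
    then show ?thesis using tail' F' embedding_into \<xi> by fastforce
  qed
  with \<eta>(1) show "ev_const r F b c v" unfolding ev_const_def by (blast dest: sless_Field)
next
  assume "ev_const r F b c v"
  then obtain \<eta> where \<eta>: "sless r (Some \<eta>) b" and tail: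
    "\<And>\<xi>. (\<xi> = \<eta> \<or> sless r (Some \<eta>) (Some \<xi>)) \<and> sless r (Some \<xi>) b \<Longrightarrow> F (Some \<xi>) c = v"
    unfolding ev_const_def by (blast dest: sless_Field)
  have "F' (Some \<xi>') c = v"
    if \<xi>': "(\<xi>' = h \<eta> \<or> sless r' (Some (h \<eta>)) (Some \<xi>')) \<and> sless r' (Some \<xi>') b'" for \<xi>'
  proof (cases "\<xi>' = h \<eta>")
    case True
    then show ?thesis using \<eta> tail F' by simp
  next
    case False
    then obtain \<xi> where "sless r (Some \<xi>) b" "\<xi>' = h \<xi>"
      using embedding_final[OF \<eta>] \<xi>' by blast
    then show ?thesis using \<xi>' False \<eta> tail F' embedding_order_iff by metis
  qed
  with embedding_into[OF \<eta>] show "ev_const r' F' b' c v" unfolding ev_const_def by (blast dest: sless_Field)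
qed

lemma succ_stage_embedding:
  assumes "succ_stage r' \<eta>' b'"
  obtains \<eta> where "succ_stage r \<eta> b" and "h \<eta> = \<eta>'"
proof -
  from assms obtain \<eta> where \<eta>: "sless r (Some \<eta>) b" "h \<eta> = \<eta>' \<or> sless r' (Some \<eta>') (Some (h \<eta>))"
    unfolding succ_stage_def using embedding_cofinal by blast
  then have "h \<eta> = \<eta>'" using assms embedding_into unfolding succ_stage_def by blast
  moreover have "succ_stage r \<eta> b"
    using assms \<eta>(1) embedding_into embedding_order_iff[OF \<eta>(1)] \<open>h \<eta> = \<eta>'\<close>
    unfolding succ_stage_def by blast
  ultimately show ?thesis using that by blast
qed

lemma limit_stage_embedding:
  assumes "trans r'" "antisym r'" and "limit_stage r' b'"
  shows "limit_stage r b"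
  unfolding limit_stage_def
proof (intro conjI allI impI)
  show "\<exists>\<eta>. sless r (Some \<eta>) b" using assms(3) embedding_cofinal unfolding limit_stage_def by blast
next
  fix \<eta> assume \<eta>: "sless r (Some \<eta>) b"
  then obtain \<xi>' where \<xi>': "sless r' (Some (h \<eta>)) (Some \<xi>')" "sless r' (Some \<xi>') b'"
    using assms(3) embedding_into unfolding limit_stage_def by blast
  then obtain \<xi> where \<xi>: "sless r (Some \<xi>) b" "h \<xi> = \<xi>' \<or> sless r' (Some \<xi>') (Some (h \<xi>))"
    using embedding_cofinal by blast
  then have "sless r' (Some (h \<eta>)) (Some (h \<xi>))" using \<xi>'(1) sless_trans[OF assms(1,2)] by blast
  then show "\<exists>\<xi>. sless r (Some \<eta>) (Some \<xi>) \<and> sless r (Some \<xi>) b"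
    using embedding_order_iff[OF \<eta> \<xi>(1)] \<xi>(1) by blast
qed

lemma run_stage_embedding:
  assumes "run_stage P r s f0 F b" and "trans r'" "antisym r'"
    and F': "\<And>\<eta>. sless r (Some \<eta>) b \<Longrightarrow> F' (Some (h \<eta>)) = F (Some \<eta>)"
    and s': "\<And>\<eta>. sless r (Some \<eta>) b \<Longrightarrow> s' (h \<eta>) = s \<eta>"
    and "F' b' = F b" and "(\<nexists>\<eta>. sless r (Some \<eta>) b) \<Longrightarrow> f0' = f0"
  shows "run_stage P r' s' f0' F' b'"
proof (rule run_stageI)
  assume "\<nexists>\<eta>'. sless r' (Some \<eta>') b'"
  then have "\<nexists>\<eta>. sless r (Some \<eta>) b" using embedding_into by blast
  then show "F' b' = f0'" using run_stage_initial[OF assms(1)] assms(6,7) by simp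
next
  fix \<eta>' assume "succ_stage r' \<eta>' b'"
  then obtain \<eta> where "succ_stage r \<eta> b" "h \<eta> = \<eta>'" by (rule succ_stage_embedding)
  then show "F' b' = act P (s' \<eta>') (F' (Some \<eta>'))"
    using run_stage_succ[OF assms(1)] F' s' assms(6) unfolding succ_stage_def by auto
next
  fix c assume "limit_stage r' b'"
  then have "limit_stage r b" using limit_stage_embedding assms(2,3) by blast
  then show "if \<exists>v. ev_const r' F' b' c v then ev_const r' F' b' c (F' b' c) else F' b' c = None"
    using run_stage_limit[OF assms(1)] ev_const_embedding_iff[where F' = F' and F = F, OF assms(2,3) F']
      assms(6)
    by simp
qed

end

lemma concat_rel_Inl_Inl [simp]: "(Inl a, Inl a') \<in> concat_rel r1 r2 \<longleftrightarrow> (a, a') \<in> r1"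
  by (auto simp: concat_rel_def)

lemma concat_rel_Inr_Inr [simp]: "(Inr b, Inr b') \<in> concat_rel r1 r2 \<longleftrightarrow> (b, b') \<in> r2"
  by (auto simp: concat_rel_def)

lemma concat_rel_Inl_Inr [simp]: "(Inl a, Inr b) \<in> concat_rel r1 r2 \<longleftrightarrow> a \<in> Field r1 \<and> b \<in> Field r2"
  by (auto simp: concat_rel_def)

lemma concat_rel_Inr_Inl [simp]: "(Inr b, Inl a) \<notin> concat_rel r1 r2"
  by (auto simp: concat_rel_def)

lemma Field_concat_rel: "Field (concat_rel r1 r2) = Inl ` Field r1 \<union> Inr ` Field r2"
  unfolding concat_rel_def Field_def by (auto simp: image_iff)

lemma trans_concat_rel: "trans r1 \<Longrightarrow> trans r2 \<Longrightarrow> trans (concat_rel r1 r2)"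
  unfolding trans_def by (auto intro: FieldI1 FieldI2 simp: concat_rel_def)

lemma antisym_concat_rel: "antisym r1 \<Longrightarrow> antisym r2 \<Longrightarrow> antisym (concat_rel r1 r2)"
  unfolding antisym_def by (auto simp: concat_rel_def)

lemma stages_concat_rel_cases:
  assumes "b \<in> stages (concat_rel r1 r2)"
  obtains i where "i \<in> Field r1" "b = Some (Inl i)" | b2 where "b2 \<in> stages r2" "b = map_option Inr b2"
proof (cases b)
  case None
  then show ?thesis using that(2)[of None] by (simp add: stages_def)
next
  case (Some x)
  show ?thesis
  proof (cases x)
    case (Inl i)
    then show ?thesis using that(1) assms Some by (auto simp: stages_def Field_concat_rel)
  next
    case (Inr j)
    then show ?thesis using that(2)[of "Some j"] assms Some by (auto simp: stages_def Field_concat_rel)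
  qed
qed

lemma sless_concat_rel_Inl:
  "sless (concat_rel r1 r2) (Some \<eta>') (Some (Inl i)) \<longleftrightarrow> (\<exists>a. \<eta>' = Inl a \<and> sless r1 (Some a) (Some i))"
  by (cases \<eta>') auto

lemma sless_concat_rel_map_Inr:
  "b2 \<in> stages r2 \<Longrightarrow> sless (concat_rel r1 r2) (Some \<eta>') (map_option Inr b2) \<longleftrightarrow>
     (\<exists>a\<in>Field r1. \<eta>' = Inl a) \<or> (\<exists>b. \<eta>' = Inr b \<and> sless r2 (Some b) b2)"
  by (cases \<eta>'; cases b2) (auto simp: stages_def Field_concat_rel)

lemma embedding_Inl_stage:
  "i \<in> Field r1 \<Longrightarrow> cofinal_segment_embedding r1 (Some i) (concat_rel r1 r2) (Some (Inl i)) Inl"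
  unfolding cofinal_segment_embedding_def sless_concat_rel_Inl by auto

lemma embedding_Inr_stage:
  "b2 \<in> stages r2 \<Longrightarrow> \<exists>\<eta>. sless r2 (Some \<eta>) b2 \<Longrightarrow>
     cofinal_segment_embedding r2 b2 (concat_rel r1 r2) (map_option Inr b2) Inr"
  unfolding cofinal_segment_embedding_def sless_concat_rel_map_Inr
  by auto (blast dest: sless_Field)

lemma embedding_end_stage:
  "b2 \<in> stages r2 \<Longrightarrow> \<nexists>\<eta>. sless r2 (Some \<eta>) b2 \<Longrightarrow>
     cofinal_segment_embedding r1 None (concat_rel r1 r2) (map_option Inr b2) Inl"
  unfolding cofinal_segment_embedding_def sless_concat_rel_map_Inr
  by auto

definition concat_run :: "('i option \<Rightarrow> 'c \<Rightarrow> 'x option) \<Rightarrow> ('j option \<Rightarrow> 'c \<Rightarrow> 'x option)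
    \<Rightarrow> ('i + 'j) option \<Rightarrow> 'c \<Rightarrow> 'x option" where
  "concat_run F1 F2 b =
     (case b of None \<Rightarrow> F2 None | Some (Inl i) \<Rightarrow> F1 (Some i) | Some (Inr j) \<Rightarrow> F2 (Some j))"

lemma concat_run_Inl [simp]: "concat_run F1 F2 (Some (Inl i)) = F1 (Some i)"
  by (simp add: concat_run_def)

lemma concat_run_Inr [simp]: "concat_run F1 F2 (Some (Inr j)) = F2 (Some j)"
  by (simp add: concat_run_def)

lemma concat_run_map_Inr [simp]: "concat_run F1 F2 (map_option Inr b2) = F2 b2"
  by (cases b2) (simp_all add: concat_run_def)

lemma is_run_concat:
  assumes "trans r1" "antisym r1" "trans r2" "antisym r2"
    and run1: "is_run P r1 s1 f0 F1" and run2: "is_run P r2 s2 (F1 None) F2"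
  shows "is_run P (concat_rel r1 r2) (concat_seq s1 s2) f0 (concat_run F1 F2)"
  unfolding is_run_iff
proof
  have R: "trans (concat_rel r1 r2)" "antisym (concat_rel r1 r2)"
    using assms(1-4) by (simp_all add: trans_concat_rel antisym_concat_rel)
  fix b assume "b \<in> stages (concat_rel r1 r2)"
  then show "run_stage P (concat_rel r1 r2) (concat_seq s1 s2) f0 (concat_run F1 F2) b"
  proof (cases rule: stages_concat_rel_cases)
    case (1 i)
    have stage1: "run_stage P r1 s1 f0 F1 (Some i)"
      using run1 1(1) by (simp add: is_run_iff stages_def)
    show ?thesis
      unfolding 1(2)
      by (rule run_stage_embedding[OF embedding_Inl_stage[OF 1(1)] stage1 R])
        (simp_all add: concat_seq_def)
  next
    case (2 b2)
    have stage2: "run_stage P r2 s2 (F1 None) F2 b2" using run2 2(1) by (simp add: is_run_iff)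
    show ?thesis
    proof (cases "\<exists>\<eta>. sless r2 (Some \<eta>) b2")
      case True
      show ?thesis
        unfolding 2(2)
        by (rule run_stage_embedding[OF embedding_Inr_stage[OF 2(1) True] stage2 R])
          (simp_all add: concat_seq_def True)
    next
      case False
      have stage1: "run_stage P r1 s1 f0 F1 None" using run1 by (simp add: is_run_iff stages_def)
      have initial: "F2 b2 = F1 None" by (rule run_stage_initial[OF stage2 False])
      show ?thesis
        unfolding 2(2)
        by (rule run_stage_embedding[OF embedding_end_stage[OF 2(1) False] stage1 R])
          (simp_all add: concat_seq_def initial)
    qed
  qed
qed

lemma univ_conv_empty: "univ_conv C P {} s"
  unfolding univ_conv_def is_run_def by (auto simp: sless_def)

lemma univ_conv_concat:
  assumes "cell_symmetries C P" and "Well_order r1" "Well_order r2"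
    and "univ_conv C P r1 s1" "univ_conv C P r2 s2"
  shows "univ_conv C P (concat_rel r1 r2) (concat_seq s1 s2)"
proof -
  obtain F1 where run1: "is_run P r1 s1 Some F1" and legal1: "\<forall>c\<in>C. F1 None c \<noteq> None"
    using assms(4) unfolding univ_conv_def by blast
  obtain F2 where run2: "is_run P r2 s2 Some F2" and legal2: "\<forall>c\<in>C. F2 None c \<noteq> None"
    using assms(5) unfolding univ_conv_def by blast
  have faithful1: "faithful_labelling C (F1 None)" and faithful2: "faithful_labelling C (F2 None)"
    using run_from_id_faithful[OF assms(2,1) run1] run_from_id_faithful[OF assms(3,1) run2]
    by (simp_all add: stages_def)
  have "is_run P r2 s2 (F1 None) (\<lambda>b. F1 None \<circ>\<^sub>m F2 b)"
    using faithful1 unfolding faithful_labelling_def by (blast intro: is_run_map_comp[OF assms(3) run2])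
  moreover have "trans r1" "antisym r1" "trans r2" "antisym r2"
    using assms(2,3) by (simp_all add: order_on_defs)
  ultimately have
    "is_run P (concat_rel r1 r2) (concat_seq s1 s2) Some (concat_run F1 (\<lambda>b. F1 None \<circ>\<^sub>m F2 b))"
    using is_run_concat run1 by blast
  moreover have "(F1 None \<circ>\<^sub>m F2 None) c \<noteq> None" if "c \<in> C" for c
    using that legal1 legal2 faithful2 unfolding faithful_labelling_def by (auto simp: map_comp_def)
  ultimately show ?thesis
    unfolding univ_conv_def by (auto simp: concat_run_def)
qed

theorem corollary3p4:
  fixes L :: "'a set"
    and s0 :: "'k \<Rightarrow> 'a twist"
    and r1 :: "'i rel" and s1 :: "'i \<Rightarrow> 'a twist"
    and r2 :: "'j rel" and s2 :: "'j \<Rightarrow> 'a twist"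
  assumes "infinite L"
  shows
    "(univ_conv (edgeless_cube L) perm_edgeless ({} :: 'k rel) s0 \<and>
      (basic_seq L r1 s1 \<and> basic_seq L r2 s2 \<and>
       univ_conv (edgeless_cube L) perm_edgeless r1 s1 \<and>
       univ_conv (edgeless_cube L) perm_edgeless r2 s2
       \<longrightarrow> univ_conv (edgeless_cube L) perm_edgeless (concat_rel r1 r2) (concat_seq s1 s2)))
   \<and> (univ_conv (edged_cube L) perm_edged ({} :: 'k rel) s0 \<and>
      (basic_seq L r1 s1 \<and> basic_seq L r2 s2 \<and>
       univ_conv (edged_cube L) perm_edged r1 s1 \<and>
       univ_conv (edged_cube L) perm_edged r2 s2
       \<longrightarrow> univ_conv (edged_cube L) perm_edged (concat_rel r1 r2) (concat_seq s1 s2)))"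
proof (intro conjI impI univ_conv_empty)
  assume "basic_seq L r1 s1 \<and> basic_seq L r2 s2 \<and>
    univ_conv (edgeless_cube L) perm_edgeless r1 s1 \<and> univ_conv (edgeless_cube L) perm_edgeless r2 s2"
  then show "univ_conv (edgeless_cube L) perm_edgeless (concat_rel r1 r2) (concat_seq s1 s2)"
    unfolding basic_seq_def by (blast intro: univ_conv_concat[OF cell_symmetries_edgeless])
next
  assume "basic_seq L r1 s1 \<and> basic_seq L r2 s2 \<and>
    univ_conv (edged_cube L) perm_edged r1 s1 \<and> univ_conv (edged_cube L) perm_edged r2 s2"
  then show "univ_conv (edged_cube L) perm_edged (concat_rel r1 r2) (concat_seq s1 s2)"
    unfolding basic_seq_def by (blast intro: univ_conv_concat[OF cell_symmetries_edged])
qed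

end
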